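(* Let $A$ be a subset of a group $G$. (a) $\operatorname{VC}^\ell_B(A)\leq\operatorname{VC}^\ell_G(A)$ for every $B\subseteq G$. (b) $\operatorname{VC}^\ell_G(A)-1\leq\dim_{\ell\mathrm{VC}}(A)\leq\operatorname{VC}^\ell_G(A)$. (c) $\operatorname{VC}^\ell_G(A)$ equals the dual VC-dimension of $\mathcal F^r_G(A)$; hence $\operatorname{VC}^\ell_G(A)<2\exp(\operatorname{VC}^r_G(A))$ and $\operatorname{VC}^r_G(A)<2\exp(\operatorname{VC}^\ell_G(A))$. (d) $\dim_{\ell\mathrm{VC}}(A)$ equals the dual VC-dimension of $\mathcal F^r_{A^{-1}}(A)$; hence $\dim_{\ell\mathrm{VC}}(A)<2\exp(\operatorname{VC}^r_{A^{-1}}(A))$ and $\operatorname{VC}^r_{A^{-1}}(A)<2\exp(\dim_{\ell\mathrm{VC}}(A))$. (e) The statements obtained from (a)–(d) by exchanging the roles of $\ell$ and $r$ throughout also hold.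
   Context: A set system $\mathcal F$ on $X$ shatters $Y\subseteq X$ if $\{Y\cap S:S\in\mathcal F\}$ is the power set of $Y$; $\operatorname{VC}(\mathcal F)$ is the maximum size of a finite shattered set ($\infty$ if unbounded). The dual system $\mathcal F^*$ is the set system on $\mathcal F$ consisting of the sets $\mathcal F_x=\{S\in\mathcal F:x\in S\}$ for $x\in\bigcup\mathcal F$; the dual VC-dimension of $\mathcal F$ is $\operatorname{VC}(\mathcal F^* )$. For $A,B\subseteq G$: $\mathcal F^\ell_B(A)=\{xA:x\in B\}$, $\mathcal F^r_B(A)=\{Ax:x\in B\}$, $\operatorname{VC}^\bullet_B(A)=\operatorname{VC}(\mathcal F^\bullet_B(A))$ for $\bullet\in\{\ell,r\}$. Sisask's variants: $\mathcal F^\ell(A|B)=\{xA\cap B:x\in BA^{-1}\}$, $\mathcal F^r(A|B)=\{Ax\cap B:x\in A^{-1}B\}$, $\dim_{\bullet\mathrm{VC}}(A|B)=\operatorname{VC}(\mathcal F^\bullet(A|B))$, $\dim_{\bullet\mathrm{VC}}(A)=\dim_{\bullet\mathrm{VC}}(A|A)$. $\exp$ is base $2$. *)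

theory Defs
  imports Main "HOL-Library.Extended_Nat"
begin

text \<open>The group G is the ambient type of class group_add; the group operation
  is written + (not assumed commutative), the inverse is unary minus.
  So xA is (\<lambda>a. x + a) ` A and A x is (\<lambda>a. a + x) ` A.\<close>

definition shatters :: "'a set set \<Rightarrow> 'a set \<Rightarrow> bool" where
  "shatters F Y \<longleftrightarrow> {Y \<inter> S | S. S \<in> F} = Pow Y"

text \<open>VC dimension: supremum (in enat) of sizes of finite shattered sets
  (Sup of the empty set is 0).\<close>
definition VC :: "'a set set \<Rightarrow> enat" where
  "VC F = Sup {enat (card Y) | Y. finite Y \<and> shatters F Y}"

definition dual_sys :: "'a set set \<Rightarrow> 'a set set set" where
  "dual_sys F = {{S \<in> F. x \<in> S} | x. x \<in> \<Union>F}"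

definition dualVC :: "'a set set \<Rightarrow> enat" where
  "dualVC F = VC (dual_sys F)"

definition setinv :: "'a::group_add set \<Rightarrow> 'a set" where
  "setinv A = uminus ` A"

definition setprod :: "'a::group_add set \<Rightarrow> 'a set \<Rightarrow> 'a set" where
  "setprod A B = {a + b | a b. a \<in> A \<and> b \<in> B}"

definition FL :: "'a::group_add set \<Rightarrow> 'a set \<Rightarrow> 'a set set" where
  "FL B A = {(\<lambda>a. x + a) ` A | x. x \<in> B}"

definition FR :: "'a::group_add set \<Rightarrow> 'a set \<Rightarrow> 'a set set" where
  "FR B A = {(\<lambda>a. a + x) ` A | x. x \<in> B}"

definition VCl :: "'a::group_add set \<Rightarrow> 'a set \<Rightarrow> enat" where
  "VCl B A = VC (FL B A)"

definition VCr :: "'a::group_add set \<Rightarrow> 'a set \<Rightarrow> enat" where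
  "VCr B A = VC (FR B A)"

definition FLc :: "'a::group_add set \<Rightarrow> 'a set \<Rightarrow> 'a set set" where
  "FLc A B = {((\<lambda>a. x + a) ` A) \<inter> B | x. x \<in> setprod B (setinv A)}"

definition FRc :: "'a::group_add set \<Rightarrow> 'a set \<Rightarrow> 'a set set" where
  "FRc A B = {((\<lambda>a. a + x) ` A) \<inter> B | x. x \<in> setprod (setinv A) B}"

definition dim_lVC_rel :: "'a::group_add set \<Rightarrow> 'a set \<Rightarrow> enat" where
  "dim_lVC_rel A B = VC (FLc A B)"

definition dim_rVC_rel :: "'a::group_add set \<Rightarrow> 'a set \<Rightarrow> enat" where
  "dim_rVC_rel A B = VC (FRc A B)"

definition dim_lVC :: "'a::group_add set \<Rightarrow> enat" where
  "dim_lVC A = dim_lVC_rel A A"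

definition dim_rVC :: "'a::group_add set \<Rightarrow> enat" where
  "dim_rVC A = dim_rVC_rel A A"

end

theory Submission
  imports Defs
begin

text \<open>
  Everything rests on one transfer principle: if a map \<open>f\<close> on the points of \<open>F\<close> is such that
  every set of \<open>F\<close> is, on the ground set of \<open>F\<close>, the \<open>f\<close>-preimage of a set of \<open>F'\<close>, then \<open>f\<close>
  maps sets shattered by \<open>F\<close> injectively onto sets shattered by \<open>F'\<close>, so \<open>VC F \<le> VC F'\<close>.

  Part (a) and the upper bound in (b) are instances with \<open>f = id\<close>. For the lower bound in (b),
  a set \<open>Y\<close> shattered by left translates lies in some \<open>gA\<close>; deleting a point \<open>y\<^sub>0\<close> of \<open>Y\<close> and
  translating by \<open>g\<^sup>-\<^sup>1\<close> turns the translates \<open>xA\<close> through \<open>y\<^sub>0\<close> into traces \<open>g\<^sup>-\<^sup>1xA \<inter> A\<close> with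
  \<open>g\<^sup>-\<^sup>1x \<in> AA\<^sup>-\<^sup>1\<close>. Parts (c) and (d) rest on \<open>x \<in> yA \<longleftrightarrow> y\<^sup>-\<^sup>1 \<in> Ax\<^sup>-\<^sup>1\<close>: the points \<open>x\<close> and sets
  \<open>yA\<close> of the left system correspond to the sets \<open>Ax\<^sup>-\<^sup>1\<close> and points \<open>y\<^sup>-\<^sup>1\<close> of the dual of the
  right system; the exponential bounds are Assouad's comparison of a set system with its dual.
  Part (e) is (a)--(d) for \<open>A\<^sup>-\<^sup>1\<close>: inversion maps left translates of \<open>A\<close> to right translates of
  \<open>A\<^sup>-\<^sup>1\<close>, and both VC dimensions are invariant under injective relabelling of the points.
\<close>

section \<open>Shattering and VC dimension\<close>

lemma shatters_iff: "shatters F Y \<longleftrightarrow> (\<forall>Z\<subseteq>Y. \<exists>S\<in>F. Y \<inter> S = Z)"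
  unfolding shatters_def
proof
  assume traces: "{Y \<inter> S |S. S \<in> F} = Pow Y"
  show "\<forall>Z\<subseteq>Y. \<exists>S\<in>F. Y \<inter> S = Z"
  proof (intro allI impI)
    fix Z assume "Z \<subseteq> Y"
    then have "Z \<in> {Y \<inter> S |S. S \<in> F}" unfolding traces by simp
    then show "\<exists>S\<in>F. Y \<inter> S = Z" by auto
  qed
next
  assume "\<forall>Z\<subseteq>Y. \<exists>S\<in>F. Y \<inter> S = Z"
  then show "{Y \<inter> S |S. S \<in> F} = Pow Y" by auto
qed

lemma shatters_imp_subset: "shatters F Y \<Longrightarrow> \<exists>S\<in>F. Y \<subseteq> S"
  unfolding shatters_iff by (metis inf.orderI order_refl)

lemma shatters_iff_mem: "shatters F Y \<longleftrightarrow> (\<forall>Z\<subseteq>Y. \<exists>S\<in>F. \<forall>y\<in>Y. y \<in> S \<longleftrightarrow> y \<in> Z)"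
  unfolding shatters_iff
proof (intro iffI allI impI)
  fix Z assume "\<forall>Z\<subseteq>Y. \<exists>S\<in>F. Y \<inter> S = Z" "Z \<subseteq> Y"
  then obtain S where "S \<in> F" "Y \<inter> S = Z" by meson
  then show "\<exists>S\<in>F. \<forall>y\<in>Y. y \<in> S \<longleftrightarrow> y \<in> Z" by blast
next
  fix Z assume "\<forall>Z\<subseteq>Y. \<exists>S\<in>F. \<forall>y\<in>Y. y \<in> S \<longleftrightarrow> y \<in> Z" "Z \<subseteq> Y"
  then obtain S where "S \<in> F" "\<forall>y\<in>Y. y \<in> S \<longleftrightarrow> y \<in> Z" by meson
  then show "\<exists>S\<in>F. Y \<inter> S = Z" using \<open>Z \<subseteq> Y\<close> by blast
qed

lemma shatters_Diff_singleton:
  assumes "shatters F Y" "y \<in> Y"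
  shows "shatters {S \<in> F. y \<in> S} (Y - {y})"
  unfolding shatters_iff
proof (intro allI impI)
  fix Z assume "Z \<subseteq> Y - {y}"
  then have "insert y Z \<subseteq> Y" using assms(2) by blast
  then obtain S where "S \<in> F" "Y \<inter> S = insert y Z"
    using assms(1) unfolding shatters_iff by blast
  then show "\<exists>S\<in>{S \<in> F. y \<in> S}. (Y - {y}) \<inter> S = Z"
    using \<open>Z \<subseteq> Y - {y}\<close> by blast
qed

lemma shatters_image_embedding:
  assumes shatters: "shatters F Y" and "Y \<subseteq> X"
    and embed: "\<And>S. S \<in> F \<Longrightarrow> \<exists>S'\<in>F'. \<forall>x\<in>X. f x \<in> S' \<longleftrightarrow> x \<in> S"
  shows "shatters F' (f ` Y)" and "inj_on f Y"
proof -
  have trace: "\<exists>S'\<in>F'. \<forall>y\<in>Y. f y \<in> S' \<longleftrightarrow> y \<in> Z" if "Z \<subseteq> Y" for Z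
  proof -
    obtain S where "S \<in> F" "Y \<inter> S = Z"
      using shatters \<open>Z \<subseteq> Y\<close> unfolding shatters_iff by blast
    moreover obtain S' where "S' \<in> F'" "\<forall>x\<in>X. f x \<in> S' \<longleftrightarrow> x \<in> S"
      using embed \<open>S \<in> F\<close> by blast
    ultimately show ?thesis using \<open>Y \<subseteq> X\<close> by blast
  qed
  show "inj_on f Y"
  proof (rule inj_onI)
    fix y y' assume "y \<in> Y" "y' \<in> Y" "f y = f y'"
    obtain S' where "\<forall>z\<in>Y. f z \<in> S' \<longleftrightarrow> z \<in> {y}"
      using trace[of "{y}"] \<open>y \<in> Y\<close> by blast
    then have "f y \<in> S'" "f y' \<in> S' \<longleftrightarrow> y' = y"
      using \<open>y \<in> Y\<close> \<open>y' \<in> Y\<close> by auto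
    then show "y = y'" using \<open>f y = f y'\<close> by metis
  qed
  show "shatters F' (f ` Y)"
    unfolding shatters_iff
  proof (intro allI impI)
    fix Z assume "Z \<subseteq> f ` Y"
    obtain S' where "S' \<in> F'" "\<forall>y\<in>Y. f y \<in> S' \<longleftrightarrow> f y \<in> Z"
      using trace[of "Y \<inter> f -` Z"] by auto
    moreover have "f ` Y \<inter> S' = Z"
      using \<open>Z \<subseteq> f ` Y\<close> \<open>\<forall>y\<in>Y. f y \<in> S' \<longleftrightarrow> f y \<in> Z\<close> by fastforce
    ultimately show "\<exists>S'\<in>F'. f ` Y \<inter> S' = Z" by blast
  qed
qed

lemma enat_card_le_VC: "finite Y \<Longrightarrow> shatters F Y \<Longrightarrow> enat (card Y) \<le> VC F"
  unfolding VC_def by (rule Sup_upper) blast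

lemma VC_leI:
  assumes "\<And>Y. finite Y \<Longrightarrow> shatters F Y \<Longrightarrow> Y \<noteq> {} \<Longrightarrow> enat (card Y) \<le> n"
  shows "VC F \<le> n"
  unfolding VC_def
proof (rule Sup_least, clarify)
  fix Y assume "finite Y" "shatters F Y"
  with assms show "enat (card Y) \<le> n"
    by (cases "Y = {}") (simp_all add: zero_enat_def[symmetric])
qed

lemma VC_less_enatI:
  assumes "0 < n" "\<And>Y. finite Y \<Longrightarrow> shatters F Y \<Longrightarrow> card Y < n"
  shows "VC F < enat n"
proof -
  have "VC F \<le> enat (n - 1)"
  proof (rule VC_leI)
    fix Y assume "finite Y" "shatters F Y"
    then show "enat (card Y) \<le> enat (n - 1)" using assms(2) by fastforce
  qed
  also have "\<dots> < enat n" using assms(1) by simp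
  finally show ?thesis .
qed

lemma VC_eq_0_if_Union_empty:
  assumes "\<Union>F = {}" shows "VC F = 0"
proof -
  have "VC F \<le> 0"
  proof (rule VC_leI)
    fix Y assume "shatters F Y" "Y \<noteq> {}"
    then show "enat (card Y) \<le> 0" using assms shatters_imp_subset by blast
  qed
  then show ?thesis by simp
qed

lemma VC_le_VC_embedding:
  assumes "\<And>S. S \<in> F \<Longrightarrow> \<exists>S'\<in>F'. \<forall>x\<in>\<Union>F. f x \<in> S' \<longleftrightarrow> x \<in> S"
  shows "VC F \<le> VC F'"
proof (rule VC_leI)
  fix Y assume "finite Y" "shatters F Y"
  moreover have "Y \<subseteq> \<Union>F" using shatters_imp_subset[OF \<open>shatters F Y\<close>] by blast
  ultimately have "shatters F' (f ` Y)" "inj_on f Y"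
    using shatters_image_embedding[of F Y "\<Union>F" F' f] assms by blast+
  then show "enat (card Y) \<le> VC F'"
    using enat_card_le_VC[of "f ` Y" F'] \<open>finite Y\<close> by (simp add: card_image)
qed

lemma VC_mono: "F \<subseteq> F' \<Longrightarrow> VC F \<le> VC F'"
  by (rule VC_le_VC_embedding[where f = id]) auto

lemma VC_image_inj:
  assumes "inj g"
  shows "VC ((\<lambda>S. g ` S) ` F) = VC F"
proof (rule antisym)
  show "VC ((\<lambda>S. g ` S) ` F) \<le> VC F"
  proof (rule VC_le_VC_embedding[where f = "inv g"])
    fix S' assume "S' \<in> (\<lambda>S. g ` S) ` F"
    then obtain S where "S \<in> F" "S' = g ` S" by blast
    then show "\<exists>S\<in>F. \<forall>x\<in>\<Union>((\<lambda>S. g ` S) ` F). inv g x \<in> S \<longleftrightarrow> x \<in> S'"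
      by (intro bexI[of _ S]) (auto simp: inv_f_f[OF assms] inj_image_mem_iff[OF assms])
  qed
  show "VC F \<le> VC ((\<lambda>S. g ` S) ` F)"
  proof (rule VC_le_VC_embedding[where f = g])
    fix S assume "S \<in> F"
    then show "\<exists>S'\<in>(\<lambda>S. g ` S) ` F. \<forall>x\<in>\<Union>F. g x \<in> S' \<longleftrightarrow> x \<in> S"
      by (intro bexI[of _ "g ` S"]) (auto simp: inj_image_mem_iff[OF assms])
  qed
qed

section \<open>Dual set systems\<close>

lemma bex_dual_sys_iff: "(\<exists>T\<in>dual_sys F. P T) \<longleftrightarrow> (\<exists>x\<in>\<Union>F. P {S \<in> F. x \<in> S})"
  unfolding dual_sys_def by blast

lemma Union_dual_sys_subset: "\<Union>(dual_sys F) \<subseteq> F"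
  unfolding dual_sys_def by blast

lemma shatters_dual_sys_iff:
  "shatters (dual_sys F) Y \<longleftrightarrow> Y \<subseteq> F \<and> (\<forall>W\<subseteq>Y. \<exists>x\<in>\<Union>F. \<forall>S\<in>Y. x \<in> S \<longleftrightarrow> S \<in> W)"
proof -
  have "shatters (dual_sys F) Y \<longleftrightarrow> (\<forall>W\<subseteq>Y. \<exists>x\<in>\<Union>F. Y \<inter> {S \<in> F. x \<in> S} = W)"
    unfolding shatters_iff bex_dual_sys_iff ..
  also have "\<dots> \<longleftrightarrow> Y \<subseteq> F \<and> (\<forall>W\<subseteq>Y. \<exists>x\<in>\<Union>F. \<forall>S\<in>Y. x \<in> S \<longleftrightarrow> S \<in> W)"
  proof (intro iffI conjI allI impI)
    assume traces: "\<forall>W\<subseteq>Y. \<exists>x\<in>\<Union>F. Y \<inter> {S \<in> F. x \<in> S} = W"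
    then show "Y \<subseteq> F" by blast
    fix W assume "W \<subseteq> Y"
    with traces obtain x where "x \<in> \<Union>F" "Y \<inter> {S \<in> F. x \<in> S} = W" by blast
    then show "\<exists>x\<in>\<Union>F. \<forall>S\<in>Y. x \<in> S \<longleftrightarrow> S \<in> W" using \<open>Y \<subseteq> F\<close> by blast
  next
    fix W assume "Y \<subseteq> F \<and> (\<forall>W\<subseteq>Y. \<exists>x\<in>\<Union>F. \<forall>S\<in>Y. x \<in> S \<longleftrightarrow> S \<in> W)" "W \<subseteq> Y"
    then obtain x where "x \<in> \<Union>F" "\<forall>S\<in>Y. x \<in> S \<longleftrightarrow> S \<in> W" "Y \<subseteq> F" by blast
    moreover have "Y \<inter> {S \<in> F. x \<in> S} = W"
      using \<open>W \<subseteq> Y\<close> \<open>Y \<subseteq> F\<close> \<open>\<forall>S\<in>Y. x \<in> S \<longleftrightarrow> S \<in> W\<close> by blast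
    ultimately show "\<exists>x\<in>\<Union>F. Y \<inter> {S \<in> F. x \<in> S} = W" by blast
  qed
  finally show ?thesis .
qed

lemma dualVC_image_inj:
  assumes "inj g"
  shows "dualVC ((\<lambda>S. g ` S) ` F) = dualVC F"
  unfolding dualVC_def
proof (rule antisym)
  show "VC (dual_sys ((\<lambda>S. g ` S) ` F)) \<le> VC (dual_sys F)"
  proof (rule VC_le_VC_embedding[where f = "\<lambda>T. g -` T"])
    fix S assume "S \<in> dual_sys ((\<lambda>S. g ` S) ` F)"
    then obtain x where "x \<in> \<Union>F" "S = {T \<in> (\<lambda>S. g ` S) ` F. g x \<in> T}"
      unfolding dual_sys_def by blast
    moreover have "{T \<in> F. x \<in> T} \<in> dual_sys F"
      using \<open>x \<in> \<Union>F\<close> unfolding dual_sys_def by blast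
    ultimately show "\<exists>S'\<in>dual_sys F.
        \<forall>T\<in>\<Union>(dual_sys ((\<lambda>S. g ` S) ` F)). g -` T \<in> S' \<longleftrightarrow> T \<in> S"
      using Union_dual_sys_subset[of "(\<lambda>S. g ` S) ` F"]
      by (intro bexI[of _ "{T \<in> F. x \<in> T}"])
        (auto simp: inj_vimage_image_eq[OF assms] inj_image_mem_iff[OF assms])
  qed
  show "VC (dual_sys F) \<le> VC (dual_sys ((\<lambda>S. g ` S) ` F))"
  proof (rule VC_le_VC_embedding[where f = "\<lambda>T. g ` T"])
    fix S assume "S \<in> dual_sys F"
    then obtain x where "x \<in> \<Union>F" "S = {T \<in> F. x \<in> T}"
      unfolding dual_sys_def by blast
    moreover have "{T \<in> (\<lambda>S. g ` S) ` F. g x \<in> T} \<in> dual_sys ((\<lambda>S. g ` S) ` F)"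
      using \<open>x \<in> \<Union>F\<close> unfolding dual_sys_def by blast
    ultimately show "\<exists>S'\<in>dual_sys ((\<lambda>S. g ` S) ` F).
        \<forall>T\<in>\<Union>(dual_sys F). g ` T \<in> S' \<longleftrightarrow> T \<in> S"
      using Union_dual_sys_subset[of F]
      by (intro bexI[of _ "{T \<in> (\<lambda>S. g ` S) ` F. g x \<in> T}"])
        (auto simp: inj_image_mem_iff[OF assms] inj_image_eq_iff[OF assms])
  qed
qed

text \<open>
  Assouad's coding: label \<open>2\<^sup>k\<close> points of \<open>Y\<close> injectively by the subsets \<open>J\<close> of \<open>{..<k}\<close>, and
  for each \<open>j\<close> let \<open>s j\<close> cut out the points whose label contains \<open>j\<close>. The point labelled \<open>J\<close> is
  then related to exactly the \<open>s j\<close> with \<open>j \<in> J\<close>.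
\<close>
lemma dual_shattered_subset_of_exp_shattered:
  fixes R :: "'p \<Rightarrow> 's \<Rightarrow> bool"
  assumes "finite Y" and "2 ^ k \<le> card Y"
    and shattered: "\<forall>Z\<subseteq>Y. \<exists>s\<in>Ss. \<forall>y\<in>Y. R y s \<longleftrightarrow> y \<in> Z"
  shows "\<exists>T\<subseteq>Ss. card T = k \<and> (\<forall>W\<subseteq>T. \<exists>y\<in>Y. \<forall>t\<in>T. R y t \<longleftrightarrow> t \<in> W)"
proof -
  have "card (Pow {..<k}) \<le> card Y" using assms(2) by (simp add: card_Pow)
  then obtain code where code: "code ` Pow {..<k} \<subseteq> Y" "inj_on code (Pow {..<k})"
    using card_le_inj[of "Pow {..<k}" Y] \<open>finite Y\<close> by blast
  have "\<exists>s\<in>Ss. \<forall>y\<in>Y. R y s \<longleftrightarrow> y \<in> code ` {J \<in> Pow {..<k}. j \<in> J}" for j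
  proof -
    have "code ` {J \<in> Pow {..<k}. j \<in> J} \<subseteq> Y" using code(1) by blast
    then show ?thesis using shattered by blast
  qed
  then obtain s where s: "\<And>j. s j \<in> Ss"
    "\<And>j y. y \<in> Y \<Longrightarrow> R y (s j) \<longleftrightarrow> y \<in> code ` {J \<in> Pow {..<k}. j \<in> J}"
    by metis
  have R_code: "R (code J) (s j) \<longleftrightarrow> j \<in> J" if "J \<subseteq> {..<k}" for J j
  proof -
    have "R (code J) (s j) \<longleftrightarrow> code J \<in> code ` {J \<in> Pow {..<k}. j \<in> J}"
      using s(2) code(1) that by blast
    also have "\<dots> \<longleftrightarrow> J \<in> {J \<in> Pow {..<k}. j \<in> J}"
      by (rule inj_on_image_mem_iff[OF code(2)]) (use that in auto)
    also have "\<dots> \<longleftrightarrow> j \<in> J" using that by simp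
    finally show ?thesis .
  qed
  have "inj_on s {..<k}"
  proof (rule inj_onI)
    fix i j assume "i \<in> {..<k}" "j \<in> {..<k}" "s i = s j"
    have "R (code {i}) (s i)" using R_code[of "{i}" i] \<open>i \<in> {..<k}\<close> by simp
    then have "R (code {i}) (s j)" unfolding \<open>s i = s j\<close> .
    then show "i = j" using R_code[of "{i}" j] \<open>i \<in> {..<k}\<close> by simp
  qed
  then have "card (s ` {..<k}) = k" by (simp add: card_image)
  moreover have "\<exists>y\<in>Y. \<forall>t\<in>s ` {..<k}. R y t \<longleftrightarrow> t \<in> W" if "W \<subseteq> s ` {..<k}" for W
  proof
    let ?J = "{j \<in> {..<k}. s j \<in> W}"
    have "?J \<in> Pow {..<k}" by blast
    then show "code ?J \<in> Y" using code(1) by (meson image_subset_iff)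
    show "\<forall>t\<in>s ` {..<k}. R (code ?J) t \<longleftrightarrow> t \<in> W"
    proof
      fix t assume "t \<in> s ` {..<k}"
      then obtain j where "j < k" "t = s j" by blast
      have "R (code ?J) (s j) \<longleftrightarrow> j \<in> ?J" by (rule R_code) blast
      also have "\<dots> \<longleftrightarrow> s j \<in> W" using \<open>j < k\<close> by simp
      finally show "R (code ?J) t \<longleftrightarrow> t \<in> W" unfolding \<open>t = s j\<close> .
    qed
  qed
  moreover have "s ` {..<k} \<subseteq> Ss" using s(1) by blast
  ultimately show ?thesis by blast
qed

lemma dualVC_less_if_VC_eq:
  assumes "VC F = enat d"
  shows "dualVC F < enat (2 * 2 ^ d)"
  unfolding dualVC_def
proof (rule VC_less_enatI)
  fix Y assume "finite Y" "shatters (dual_sys F) Y"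
  then have "Y \<subseteq> F" and shattered: "\<forall>W\<subseteq>Y. \<exists>x\<in>\<Union>F. \<forall>S\<in>Y. x \<in> S \<longleftrightarrow> S \<in> W"
    unfolding shatters_dual_sys_iff by blast+
  show "card Y < 2 * 2 ^ d"
  proof (rule ccontr)
    assume "\<not> card Y < 2 * 2 ^ d"
    then have "2 ^ Suc d \<le> card Y" by simp
    from dual_shattered_subset_of_exp_shattered[OF \<open>finite Y\<close> this, of "\<Union>F" "\<lambda>S x. x \<in> S"] shattered
    obtain T where "card T = Suc d" "\<forall>W\<subseteq>T. \<exists>S\<in>Y. \<forall>t\<in>T. t \<in> S \<longleftrightarrow> t \<in> W"
      by blast
    then have "shatters F T"
      using \<open>Y \<subseteq> F\<close> unfolding shatters_iff_mem by (meson subsetD)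
    moreover have "finite T" using \<open>card T = Suc d\<close> card.infinite by force
    ultimately have "enat (Suc d) \<le> VC F" using enat_card_le_VC \<open>card T = Suc d\<close> by metis
    with assms show False by simp
  qed
qed simp

lemma VC_less_if_dualVC_eq:
  assumes "dualVC F = enat d"
  shows "VC F < enat (2 * 2 ^ d)"
proof (rule VC_less_enatI)
  fix Y assume "finite Y" "shatters F Y"
  then have "Y \<subseteq> \<Union>F" and shattered: "\<forall>Z\<subseteq>Y. \<exists>S\<in>F. \<forall>y\<in>Y. y \<in> S \<longleftrightarrow> y \<in> Z"
    using shatters_imp_subset[of F Y] unfolding shatters_iff_mem by blast+
  show "card Y < 2 * 2 ^ d"
  proof (rule ccontr)
    assume "\<not> card Y < 2 * 2 ^ d"
    then have "2 ^ Suc d \<le> card Y" by simp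
    from dual_shattered_subset_of_exp_shattered[OF \<open>finite Y\<close> this, of F "\<lambda>y S. y \<in> S"] shattered
    obtain T where "T \<subseteq> F" "card T = Suc d"
      and T_shattered: "\<forall>W\<subseteq>T. \<exists>y\<in>Y. \<forall>t\<in>T. y \<in> t \<longleftrightarrow> t \<in> W"
      by blast
    have "\<forall>W\<subseteq>T. \<exists>x\<in>\<Union>F. \<forall>S\<in>T. x \<in> S \<longleftrightarrow> S \<in> W"
      using T_shattered \<open>Y \<subseteq> \<Union>F\<close> by (meson subsetD)
    then have "shatters (dual_sys F) T"
      using \<open>T \<subseteq> F\<close> unfolding shatters_dual_sys_iff by blast
    moreover have "finite T" using \<open>card T = Suc d\<close> card.infinite by force
    ultimately have "enat (Suc d) \<le> dualVC F"
      unfolding dualVC_def using enat_card_le_VC \<open>card T = Suc d\<close> by metis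
    with assms show False by simp
  qed
qed simp

section \<open>Translates in a group\<close>

lemma mem_left_translate_iff:
  fixes A :: "'a::group_add set"
  shows "x \<in> (+) y ` A \<longleftrightarrow> -y + x \<in> A"
proof
  assume "x \<in> (+) y ` A"
  then show "-y + x \<in> A" by auto
next
  assume "-y + x \<in> A"
  then show "x \<in> (+) y ` A" by (rule image_eqI[rotated]) simp
qed

lemma mem_right_translate_iff:
  fixes A :: "'a::group_add set"
  shows "x \<in> (\<lambda>a. a + y) ` A \<longleftrightarrow> x + -y \<in> A"
proof
  assume "x \<in> (\<lambda>a. a + y) ` A"
  then show "x + -y \<in> A" by (auto simp: add.assoc)
next
  assume "x + -y \<in> A"
  then show "x \<in> (\<lambda>a. a + y) ` A" by (rule image_eqI[rotated]) (simp add: add.assoc)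
qed

lemma add_mem_left_translate_iff:
  fixes A :: "'a::group_add set"
  shows "z + x \<in> (+) (z + y) ` A \<longleftrightarrow> x \<in> (+) y ` A"
proof -
  have "-(z + y) + (z + x) = -y + x" by (simp only: minus_add add.assoc minus_add_cancel)
  then show ?thesis unfolding mem_left_translate_iff by simp
qed

lemma mem_left_translate_iff_mem_right_translate:
  fixes A :: "'a::group_add set"
  shows "x \<in> (+) y ` A \<longleftrightarrow> -y \<in> (\<lambda>a. a + -x) ` A"
  by (simp add: mem_left_translate_iff mem_right_translate_iff del: add_uminus_conv_diff)

lemma VCl_le_VCl_UNIV: "VCl B A \<le> VCl UNIV A"
  unfolding VCl_def FL_def by (rule VC_mono) blast

lemma dim_lVC_le_VCl_UNIV: "dim_lVC A \<le> VCl UNIV A"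
  unfolding dim_lVC_def dim_lVC_rel_def VCl_def
proof (rule VC_le_VC_embedding[where f = id])
  fix S assume "S \<in> FLc A A"
  then obtain x where "S = (+) x ` A \<inter> A" unfolding FLc_def by blast
  moreover have "\<Union>(FLc A A) \<subseteq> A" unfolding FLc_def by blast
  ultimately show "\<exists>S'\<in>FL UNIV A. \<forall>y\<in>\<Union>(FLc A A). id y \<in> S' \<longleftrightarrow> y \<in> S"
    unfolding FL_def by (intro bexI[of _ "(+) x ` A"]) auto
qed

lemma VCl_UNIV_le_dim_lVC_plus_1: "VCl UNIV A \<le> dim_lVC A + 1"
  unfolding VCl_def
proof (rule VC_leI)
  fix Y assume Y: "finite Y" "shatters (FL UNIV A) Y" "Y \<noteq> {}"
  then obtain y0 where "y0 \<in> Y" by blast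
  obtain g where "Y \<subseteq> (+) g ` A"
    using shatters_imp_subset[OF Y(2)] unfolding FL_def by blast
  have embed: "\<exists>S'\<in>FLc A A. \<forall>y\<in>(+) g ` A. -g + y \<in> S' \<longleftrightarrow> y \<in> S"
    if S_mem: "S \<in> {S \<in> FL UNIV A. y0 \<in> S}" for S
  proof -
    obtain x where S: "S = (+) x ` A" and "y0 \<in> S" using S_mem unfolding FL_def by blast
    have "-g + x = (-g + y0) + -(-x + y0)" by (simp add: minus_add add.assoc)
    moreover have "-g + y0 \<in> A" "-x + y0 \<in> A"
      using \<open>y0 \<in> Y\<close> \<open>Y \<subseteq> (+) g ` A\<close> \<open>y0 \<in> S\<close> S by (auto simp: mem_left_translate_iff)
    ultimately have "-g + x \<in> setprod A (setinv A)" unfolding setprod_def setinv_def by blast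
    then have "(+) (-g + x) ` A \<inter> A \<in> FLc A A" unfolding FLc_def by blast
    moreover have "\<forall>y\<in>(+) g ` A. -g + y \<in> (+) (-g + x) ` A \<inter> A \<longleftrightarrow> y \<in> S"
      unfolding S Int_iff add_mem_left_translate_iff by auto
    ultimately show ?thesis by (rule bexI[rotated])
  qed
  have "Y - {y0} \<subseteq> (+) g ` A" using \<open>Y \<subseteq> (+) g ` A\<close> by blast
  note shifted = shatters_image_embedding[OF shatters_Diff_singleton[OF Y(2) \<open>y0 \<in> Y\<close>] this embed]
  have "enat (card Y) = enat (card (Y - {y0})) + 1"
    using card.remove[OF Y(1) \<open>y0 \<in> Y\<close>] by (simp add: one_enat_def)
  also have "card (Y - {y0}) = card ((+) (-g) ` (Y - {y0}))"
    by (rule card_image[OF shifted(2), symmetric])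
  also have "enat \<dots> \<le> dim_lVC A"
    unfolding dim_lVC_def dim_lVC_rel_def using enat_card_le_VC[OF _ shifted(1)] Y(1) by simp
  finally show "enat (card Y) \<le> dim_lVC A + 1" by (simp add: add_right_mono)
qed

lemma VCl_UNIV_minus_1_le_dim_lVC: "VCl UNIV A - 1 \<le> dim_lVC A"
  using VCl_UNIV_le_dim_lVC_plus_1[of A]
  by (cases "VCl UNIV A"; cases "dim_lVC A") (auto simp: one_enat_def)

lemma VCl_UNIV_eq_dualVC_FR_UNIV: "VCl UNIV A = dualVC (FR UNIV A)"
  unfolding VCl_def dualVC_def
proof (rule antisym)
  show "VC (FL UNIV A) \<le> VC (dual_sys (FR UNIV A))"
  proof (cases "A = {}")
    case True
    then show ?thesis by (simp add: FL_def VC_eq_0_if_Union_empty)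
  next
    case False
    then obtain a0 where "a0 \<in> A" by blast
    show ?thesis
    proof (rule VC_le_VC_embedding[where f = "\<lambda>x. (\<lambda>a. a + -x) ` A"])
      fix S assume "S \<in> FL UNIV A"
      then obtain y where S: "S = (+) y ` A" unfolding FL_def by blast
      have "-y \<in> (\<lambda>a. a + (-a0 + -y)) ` A"
        using \<open>a0 \<in> A\<close> by (intro image_eqI[where x = a0]) (simp_all only: add_minus_cancel)
      then have "{T \<in> FR UNIV A. -y \<in> T} \<in> dual_sys (FR UNIV A)"
        unfolding dual_sys_def FR_def by blast
      moreover have "\<forall>x\<in>\<Union>(FL UNIV A). (\<lambda>a. a + -x) ` A \<in> {T \<in> FR UNIV A. -y \<in> T} \<longleftrightarrow> x \<in> S"
        unfolding S FR_def mem_left_translate_iff_mem_right_translate by blast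
      ultimately show "\<exists>S'\<in>dual_sys (FR UNIV A).
          \<forall>x\<in>\<Union>(FL UNIV A). (\<lambda>a. a + -x) ` A \<in> S' \<longleftrightarrow> x \<in> S"
        by (rule bexI[rotated])
    qed
  qed
next
  define shift where "shift T = (SOME g. T = (\<lambda>a. a + g) ` A)" for T
  have shift: "T = (\<lambda>a. a + shift T) ` A" if "T \<in> FR UNIV A" for T
  proof -
    have "\<exists>g. T = (\<lambda>a. a + g) ` A" using that unfolding FR_def by blast
    then show ?thesis unfolding shift_def by (rule someI_ex)
  qed
  show "VC (dual_sys (FR UNIV A)) \<le> VC (FL UNIV A)"
  proof (rule VC_le_VC_embedding[where f = "\<lambda>T. - shift T"])
    fix S assume "S \<in> dual_sys (FR UNIV A)"
    then obtain x where S: "S = {T \<in> FR UNIV A. x \<in> T}" unfolding dual_sys_def by blast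
    have "- shift T \<in> (+) (-x) ` A \<longleftrightarrow> T \<in> S" if "T \<in> FR UNIV A" for T
      using mem_left_translate_iff_mem_right_translate[of "- shift T" "-x" A] shift[OF that] that
      unfolding S by auto
    then have "\<forall>T\<in>\<Union>(dual_sys (FR UNIV A)). - shift T \<in> (+) (-x) ` A \<longleftrightarrow> T \<in> S"
      using Union_dual_sys_subset[of "FR UNIV A"] by blast
    moreover have "(+) (-x) ` A \<in> FL UNIV A" unfolding FL_def by blast
    ultimately show "\<exists>S'\<in>FL UNIV A. \<forall>T\<in>\<Union>(dual_sys (FR UNIV A)). - shift T \<in> S' \<longleftrightarrow> T \<in> S"
      by (rule bexI)
  qed
qed

lemma mem_FR_setinv_iff: "T \<in> FR (setinv B) A \<longleftrightarrow> (\<exists>b\<in>B. T = (\<lambda>a. a + -b) ` A)"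
  unfolding FR_def setinv_def by blast

lemma dim_lVC_eq_dualVC_FR_setinv: "dim_lVC A = dualVC (FR (setinv A) A)"
  unfolding dim_lVC_def dim_lVC_rel_def dualVC_def
proof (rule antisym)
  show "VC (FLc A A) \<le> VC (dual_sys (FR (setinv A) A))"
  proof (rule VC_le_VC_embedding[where f = "\<lambda>y. (\<lambda>a. a + -y) ` A"])
    fix S assume "S \<in> FLc A A"
    then obtain x a b where S: "S = (+) x ` A \<inter> A" and "x = a + -b" "a \<in> A" "b \<in> A"
      unfolding FLc_def setprod_def setinv_def by blast
    then have "-x \<in> (\<lambda>c. c + -a) ` A" by (simp add: mem_right_translate_iff minus_add)
    then have "{T \<in> FR (setinv A) A. -x \<in> T} \<in> dual_sys (FR (setinv A) A)"
      unfolding dual_sys_def using mem_FR_setinv_iff \<open>a \<in> A\<close> by blast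
    moreover have "\<forall>y\<in>\<Union>(FLc A A).
        (\<lambda>a. a + -y) ` A \<in> {T \<in> FR (setinv A) A. -x \<in> T} \<longleftrightarrow> y \<in> S"
    proof
      fix y assume "y \<in> \<Union>(FLc A A)"
      then have "(\<lambda>a. a + -y) ` A \<in> FR (setinv A) A" "y \<in> A"
        unfolding mem_FR_setinv_iff FLc_def by blast+
      then show "(\<lambda>a. a + -y) ` A \<in> {T \<in> FR (setinv A) A. -x \<in> T} \<longleftrightarrow> y \<in> S"
        unfolding S Int_iff mem_left_translate_iff_mem_right_translate by blast
    qed
    ultimately show "\<exists>S'\<in>dual_sys (FR (setinv A) A).
        \<forall>y\<in>\<Union>(FLc A A). (\<lambda>a. a + -y) ` A \<in> S' \<longleftrightarrow> y \<in> S"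
      by (rule bexI[rotated])
  qed
next
  define shift where "shift T = (SOME b. b \<in> A \<and> T = (\<lambda>a. a + -b) ` A)" for T
  have shift: "shift T \<in> A" "T = (\<lambda>a. a + - shift T) ` A" if "T \<in> FR (setinv A) A" for T
  proof -
    have "\<exists>b. b \<in> A \<and> T = (\<lambda>a. a + -b) ` A" using that unfolding mem_FR_setinv_iff by blast
    then have "shift T \<in> A \<and> T = (\<lambda>a. a + - shift T) ` A"
      unfolding shift_def by (rule someI_ex)
    then show "shift T \<in> A" "T = (\<lambda>a. a + - shift T) ` A" by blast+
  qed
  show "VC (dual_sys (FR (setinv A) A)) \<le> VC (FLc A A)"
  proof (rule VC_le_VC_embedding[where f = shift])
    fix S assume "S \<in> dual_sys (FR (setinv A) A)"
    then obtain x where S: "S = {T \<in> FR (setinv A) A. x \<in> T}" and "x \<in> \<Union>(FR (setinv A) A)"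
      unfolding dual_sys_def by blast
    then obtain T where "T \<in> FR (setinv A) A" "x \<in> T" by blast
    then obtain b where "b \<in> A" "x \<in> (\<lambda>a. a + -b) ` A"
      unfolding mem_FR_setinv_iff by blast
    then have "x + b \<in> A" unfolding mem_right_translate_iff minus_minus by blast
    moreover have "-x = b + -(x + b)" by (simp only: minus_add add_minus_cancel)
    ultimately have "-x \<in> setprod A (setinv A)"
      unfolding setprod_def setinv_def using \<open>b \<in> A\<close> by blast
    then have "(+) (-x) ` A \<inter> A \<in> FLc A A" unfolding FLc_def by blast
    moreover have "shift T \<in> (+) (-x) ` A \<inter> A \<longleftrightarrow> T \<in> S" if "T \<in> FR (setinv A) A" for T
      using mem_left_translate_iff_mem_right_translate[of "shift T" "-x" A] shift[OF that] that
      unfolding S by auto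
    then have "\<forall>T\<in>\<Union>(dual_sys (FR (setinv A) A)). shift T \<in> (+) (-x) ` A \<inter> A \<longleftrightarrow> T \<in> S"
      using Union_dual_sys_subset[of "FR (setinv A) A"] by blast
    ultimately show "\<exists>S'\<in>FLc A A. \<forall>T\<in>\<Union>(dual_sys (FR (setinv A) A)). shift T \<in> S' \<longleftrightarrow> T \<in> S"
      by (rule bexI[rotated])
  qed
qed

lemma VCl_UNIV_less_if_VCr_UNIV_eq: "VCr UNIV A = enat d \<Longrightarrow> VCl UNIV A < enat (2 * 2 ^ d)"
  unfolding VCr_def VCl_UNIV_eq_dualVC_FR_UNIV by (rule dualVC_less_if_VC_eq)

lemma VCr_UNIV_less_if_VCl_UNIV_eq: "VCl UNIV A = enat d \<Longrightarrow> VCr UNIV A < enat (2 * 2 ^ d)"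
  unfolding VCr_def VCl_UNIV_eq_dualVC_FR_UNIV by (rule VC_less_if_dualVC_eq)

lemma dim_lVC_less_if_VCr_setinv_eq: "VCr (setinv A) A = enat d \<Longrightarrow> dim_lVC A < enat (2 * 2 ^ d)"
  unfolding VCr_def dim_lVC_eq_dualVC_FR_setinv by (rule dualVC_less_if_VC_eq)

lemma VCr_setinv_less_if_dim_lVC_eq: "dim_lVC A = enat d \<Longrightarrow> VCr (setinv A) A < enat (2 * 2 ^ d)"
  unfolding VCr_def dim_lVC_eq_dualVC_FR_setinv by (rule VC_less_if_dualVC_eq)

section \<open>Exchanging left and right by inversion\<close>

lemma uminus_setprod:
  fixes X Y :: "'a::group_add set"
  shows "uminus ` setprod X Y = setprod (uminus ` Y) (uminus ` X)"
  unfolding setprod_def by (force simp: minus_add)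

lemma FR_eq_image_uminus_FL: "FR B A = (\<lambda>S. uminus ` S) ` FL (uminus ` B) (uminus ` A)"
  unfolding FR_def FL_def Setcompr_eq_image by (simp add: image_image minus_add)

lemma FL_eq_image_uminus_FR: "FL B A = (\<lambda>S. uminus ` S) ` FR (uminus ` B) (uminus ` A)"
  unfolding FR_def FL_def Setcompr_eq_image by (simp add: image_image minus_add)

lemma FRc_eq_image_uminus_FLc: "FRc A B = (\<lambda>S. uminus ` S) ` FLc (uminus ` A) (uminus ` B)"
proof -
  have "setprod (setinv A) B = uminus ` setprod (uminus ` B) (setinv (uminus ` A))"
    by (simp add: uminus_setprod setinv_def image_image)
  then show ?thesis
    unfolding FRc_def FLc_def Setcompr_eq_image
    by (simp add: image_image image_Int minus_add)
qed

lemma VCr_eq_VCl_uminus: "VCr B A = VCl (uminus ` B) (uminus ` A)"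
  unfolding VCr_def VCl_def FR_eq_image_uminus_FL by (rule VC_image_inj) simp

lemma dim_rVC_eq_dim_lVC_uminus: "dim_rVC A = dim_lVC (uminus ` A)"
  unfolding dim_rVC_def dim_rVC_rel_def dim_lVC_def dim_lVC_rel_def FRc_eq_image_uminus_FLc
  by (rule VC_image_inj) simp

lemma dualVC_FL_eq_dualVC_FR_uminus: "dualVC (FL B A) = dualVC (FR (uminus ` B) (uminus ` A))"
  unfolding FL_eq_image_uminus_FR by (rule dualVC_image_inj) simp

theorem propositionA1:
  fixes A :: "'a::group_add set"
  shows
   \<comment> \<open>(a)\<close>
   "(\<forall>B. VCl B A \<le> VCl UNIV A)
    \<comment> \<open>(b)\<close>
    \<and> VCl UNIV A - 1 \<le> dim_lVC A \<and> dim_lVC A \<le> VCl UNIV A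
    \<comment> \<open>(c)\<close>
    \<and> VCl UNIV A = dualVC (FR UNIV A)
    \<and> (\<forall>d. VCr UNIV A = enat d \<longrightarrow> VCl UNIV A < enat (2 * 2 ^ d))
    \<and> (\<forall>d. VCl UNIV A = enat d \<longrightarrow> VCr UNIV A < enat (2 * 2 ^ d))
    \<comment> \<open>(d)\<close>
    \<and> dim_lVC A = dualVC (FR (setinv A) A)
    \<and> (\<forall>d. VCr (setinv A) A = enat d \<longrightarrow> dim_lVC A < enat (2 * 2 ^ d))
    \<and> (\<forall>d. dim_lVC A = enat d \<longrightarrow> VCr (setinv A) A < enat (2 * 2 ^ d))
    \<comment> \<open>(e): (a)-(d) with l and r exchanged\<close>
    \<and> (\<forall>B. VCr B A \<le> VCr UNIV A)
    \<and> VCr UNIV A - 1 \<le> dim_rVC A \<and> dim_rVC A \<le> VCr UNIV A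
    \<and> VCr UNIV A = dualVC (FL UNIV A)
    \<and> dim_rVC A = dualVC (FL (setinv A) A)
    \<and> (\<forall>d. VCl (setinv A) A = enat d \<longrightarrow> dim_rVC A < enat (2 * 2 ^ d))
    \<and> (\<forall>d. dim_rVC A = enat d \<longrightarrow> VCl (setinv A) A < enat (2 * 2 ^ d))"
proof -
  let ?A' = "uminus ` A"
  have mirror: "VCr B A = VCl (uminus ` B) ?A'" "dim_rVC A = dim_lVC ?A'"
    "dualVC (FL B A) = dualVC (FR (uminus ` B) ?A')" for B
    by (rule VCr_eq_VCl_uminus dim_rVC_eq_dim_lVC_uminus dualVC_FL_eq_dualVC_FR_uminus)+
  have setinv_mirror: "uminus ` setinv A = setinv ?A'" "VCl (setinv A) A = VCr (setinv ?A') ?A'"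
    by (simp_all add: VCr_eq_VCl_uminus setinv_def image_image)
  have "\<forall>B. VCr B A \<le> VCr UNIV A" "VCr UNIV A - 1 \<le> dim_rVC A" "dim_rVC A \<le> VCr UNIV A"
    by (simp_all add: mirror VCl_le_VCl_UNIV VCl_UNIV_minus_1_le_dim_lVC dim_lVC_le_VCl_UNIV)
  moreover have "VCr UNIV A = dualVC (FL UNIV A)" "dim_rVC A = dualVC (FL (setinv A) A)"
    by (simp_all add: mirror setinv_mirror VCl_UNIV_eq_dualVC_FR_UNIV dim_lVC_eq_dualVC_FR_setinv)
  moreover have "VCl (setinv A) A = enat d \<Longrightarrow> dim_rVC A < enat (2 * 2 ^ d)"
    "dim_rVC A = enat d \<Longrightarrow> VCl (setinv A) A < enat (2 * 2 ^ d)" for d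
    unfolding mirror setinv_mirror
    by (simp_all add: dim_lVC_less_if_VCr_setinv_eq VCr_setinv_less_if_dim_lVC_eq)
  ultimately show ?thesis
    using VCl_le_VCl_UNIV VCl_UNIV_minus_1_le_dim_lVC dim_lVC_le_VCl_UNIV
      VCl_UNIV_eq_dualVC_FR_UNIV VCl_UNIV_less_if_VCr_UNIV_eq VCr_UNIV_less_if_VCl_UNIV_eq
      dim_lVC_eq_dualVC_FR_setinv dim_lVC_less_if_VCr_setinv_eq VCr_setinv_less_if_dim_lVC_eq
    by blast
qed

end
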